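(* Let $S\subset\mathbb{R}^d$ be a $d$-simplex that is lattice complete with respect to a $d$-dimensional lattice $\Lambda$. Then the diameter directions of $S$ span $\mathbb{R}^d$.
   Context: A lattice $\Lambda\subset\mathbb{R}^d$ is a discrete subgroup spanning $\mathbb{R}^d$. A segment $[a,b]$ is a lattice segment if $b-a$ is parallel to a nonzero vector of $\Lambda$; its lattice length is $|b-a|/|v|$ where $v$ generates $\Lambda\cap\mathrm{span}\{b-a\}$ and is a positive multiple of $b-a$. For a convex body $C$ (compact convex, non-empty interior), $\mathrm{diam}_\Lambda(C)$ is the maximum lattice length of a lattice segment in $C$; a diameter direction of $C$ is a $v\in\Lambda\setminus\{0\}$ such that $C$ contains a segment $[a,a+\mathrm{diam}_\Lambda(C)v]$. $C$ is lattice complete if no convex body $C'\supsetneq C$ has $\mathrm{diam}_\Lambda(C')=\mathrm{diam}_\Lambda(C)$. *)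

theory Defs
  imports "HOL-Analysis.Analysis"
begin

definition is_lattice :: "'a::euclidean_space set \<Rightarrow> bool" where
  "is_lattice L \<longleftrightarrow> 0 \<in> L \<and> (\<forall>x\<in>L. \<forall>y\<in>L. x - y \<in> L) \<and> discrete L \<and> span L = UNIV"

definition convex_body :: "'a::euclidean_space set \<Rightarrow> bool" where
  "convex_body C \<longleftrightarrow> compact C \<and> convex C \<and> interior C \<noteq> {}"

definition lattice_segment :: "'a::euclidean_space set \<Rightarrow> 'a \<Rightarrow> 'a \<Rightarrow> bool" where
  "lattice_segment L a b \<longleftrightarrow> a \<noteq> b \<and> (\<exists>v\<in>L. v \<noteq> 0 \<and> (\<exists>c. b - a = c *\<^sub>R v))"

definition primitive_dir :: "'a::euclidean_space set \<Rightarrow> 'a \<Rightarrow> 'a \<Rightarrow> 'a \<Rightarrow> bool" where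
  "primitive_dir L a b v \<longleftrightarrow> v \<in> L \<and> (\<exists>c>0. v = c *\<^sub>R (b - a)) \<and>
     L \<inter> span {b - a} = range (\<lambda>k::int. of_int k *\<^sub>R v)"

definition lattice_length :: "'a::euclidean_space set \<Rightarrow> 'a \<Rightarrow> 'a \<Rightarrow> real" where
  "lattice_length L a b = norm (b - a) / norm (SOME v. primitive_dir L a b v)"

definition lattice_diam :: "'a::euclidean_space set \<Rightarrow> 'a set \<Rightarrow> real" where
  "lattice_diam L C = Sup {lattice_length L a b | a b. lattice_segment L a b \<and> closed_segment a b \<subseteq> C}"

definition diameter_direction :: "'a::euclidean_space set \<Rightarrow> 'a set \<Rightarrow> 'a \<Rightarrow> bool" where
  "diameter_direction L C v \<longleftrightarrow> v \<in> L \<and> v \<noteq> 0 \<and>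
     (\<exists>a. closed_segment a (a + lattice_diam L C *\<^sub>R v) \<subseteq> C)"

definition lattice_complete :: "'a::euclidean_space set \<Rightarrow> 'a set \<Rightarrow> bool" where
  "lattice_complete L C \<longleftrightarrow> convex_body C \<and>
     \<not> (\<exists>C'. convex_body C' \<and> C \<subset> C' \<and> lattice_diam L C' = lattice_diam L C)"

end

theory Submission
  imports Defs
begin

(*
  Suppose the diameter directions of S = conv C lie in a hyperplane n\<^sup>\<bottom>, and let k be a vertex
  maximising n \<bullet> _. Push the facet opposite k outwards: S' = conv (C \<union> {y}) with
  y = k + (1 + \<epsilon>)(m - k), m the centroid of that facet.

  A lattice chord of S' in a direction w with n \<bullet> w \<noteq> 0 shrinks, under the homothety with centre k
  and ratio 1 / (1 + \<epsilon>) mapping S' into S, to a chord of S in a non-diameter direction. Only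
  finitely many lattice directions carry chords longer than half the lattice diameter, so for small
  \<epsilon> these chords stay below it.

  If n \<bullet> w = 0, the coordinates d of w with respect to the vertices (summing to 0) take both signs on the facet opposite k. The
  affine function with values 1, 0, 1/2 at the vertices where d is positive, negative, zero therefore
  stays in [0, 1] at y, hence on S', and grows by P = \<Sum> max d 0 along w; so a chord of S' in
  direction w is no longer than 1 / P, the length of a chord of S in that direction.

  Thus S' \<supset> S has the same lattice diameter as S, contradicting completeness.
*)

section \<open>Chords of convex sets\<close>

definition has_chord :: "'a::real_vector set \<Rightarrow> 'a \<Rightarrow> real \<Rightarrow> bool" where
  "has_chord S w t \<longleftrightarrow> (\<exists>a\<in>S. a + t *\<^sub>R w \<in> S)"

lemma has_chord_shorten:
  assumes "convex S" "has_chord S w t" "0 \<le> s" "s \<le> t"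
  shows "has_chord S w s"
proof (cases "t = 0")
  case True
  then show ?thesis using assms by simp
next
  case False
  from assms(2) obtain a where a: "a \<in> S" "a + t *\<^sub>R w \<in> S"
    by (auto simp: has_chord_def)
  have "(1 - s / t) *\<^sub>R a + (s / t) *\<^sub>R (a + t *\<^sub>R w) \<in> S"
    using assms False a by (intro convexD_alt) auto
  moreover have "(1 - s / t) *\<^sub>R a + (s / t) *\<^sub>R (a + t *\<^sub>R w) = a + s *\<^sub>R w"
    using False by (simp add: algebra_simps)
  ultimately show ?thesis
    using a by (auto simp: has_chord_def)
qed

lemma has_chord_norm_le:
  assumes "bounded S" "has_chord S w t"
  shows "\<bar>t\<bar> * norm w \<le> diameter S"
proof -
  from assms(2) obtain a where "a \<in> S" "a + t *\<^sub>R w \<in> S"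
    by (auto simp: has_chord_def)
  then have "dist (a + t *\<^sub>R w) a \<le> diameter S"
    using assms(1) by (intro diameter_bounded_bound)
  then show ?thesis
    by (simp add: dist_norm)
qed

lemma has_chord_less_if_diameter_less:
  assumes "bounded S" "has_chord S w t" "diameter S < c * norm w"
  shows "t < c"
proof (rule ccontr)
  assume "\<not> t < c"
  then have "c * norm w \<le> t * norm w"
    by (simp add: mult_right_mono)
  also have "\<dots> \<le> \<bar>t\<bar> * norm w"
    by (simp add: mult_right_mono)
  also have "\<dots> \<le> diameter S"
    using has_chord_norm_le[OF assms(1,2)] .
  finally show False
    using assms(3) by simp
qed

lemma has_chord_iff_mem_differences:
  "has_chord S w t \<longleftrightarrow> t *\<^sub>R w \<in> {x - y | x y. x \<in> S \<and> y \<in> S}"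
proof
  assume "has_chord S w t"
  then obtain a where "a \<in> S" "a + t *\<^sub>R w \<in> S"
    by (auto simp: has_chord_def)
  then show "t *\<^sub>R w \<in> {x - y | x y. x \<in> S \<and> y \<in> S}"
    by (intro CollectI exI[of _ "a + t *\<^sub>R w"] exI[of _ a]) simp
next
  assume "t *\<^sub>R w \<in> {x - y | x y. x \<in> S \<and> y \<in> S}"
  then obtain x y where "x \<in> S" "y \<in> S" "t *\<^sub>R w = x - y"
    by blast
  then show "has_chord S w t"
    unfolding has_chord_def by (intro bexI[of _ y]) (simp_all add: algebra_simps)
qed

lemma has_chord_longest:
  fixes S :: "'a::euclidean_space set"
  assumes "compact S" "S \<noteq> {}" "w \<noteq> 0"
  shows "\<exists>t. has_chord S w t \<and> (\<forall>s. has_chord S w s \<longrightarrow> s \<le> t)"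
proof -
  define K where "K = {t. has_chord S w t}"
  have K_eq: "K = (\<lambda>t. t *\<^sub>R w) -` {x - y | x y. x \<in> S \<and> y \<in> S}"
    by (simp add: K_def vimage_def has_chord_iff_mem_differences)
  have "closed {x - y | x y. x \<in> S \<and> y \<in> S}"
    using compact_differences[OF assms(1) assms(1)] by (rule compact_imp_closed)
  then have closed: "closed K"
    unfolding K_eq by (rule continuous_closed_vimage) (intro continuous_intros)
  have bdd: "bdd_above K"
  proof (rule bdd_aboveI)
    fix t assume "t \<in> K"
    then have "\<bar>t\<bar> * norm w \<le> diameter S"
      using has_chord_norm_le[OF compact_imp_bounded[OF assms(1)]] by (simp add: K_def)
    then have "t * norm w \<le> diameter S"
      using mult_right_mono[OF abs_ge_self[of t] norm_ge_zero[of w]] by linarith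
    then show "t \<le> diameter S / norm w"
      using assms(3) by (simp add: field_simps)
  qed
  have "0 \<in> K"
    using assms(2) by (auto simp: K_def has_chord_def)
  then have "Sup K \<in> K"
    using closed_contains_Sup[OF _ bdd closed] by blast
  moreover have "s \<le> Sup K" if "s \<in> K" for s
    using cSup_upper[OF that bdd] .
  ultimately show ?thesis
    by (auto simp: K_def)
qed

lemma chords_shorter_on_finite_directions:
  fixes C :: "'a::euclidean_space set"
  assumes "compact C" "convex C" "C \<noteq> {}" "finite W" "0 < D"
    and W: "\<And>w. w \<in> W \<Longrightarrow> w \<noteq> 0 \<and> \<not> has_chord C w D"
  obtains \<delta> where "\<delta> < D" "\<And>w t. w \<in> W \<Longrightarrow> has_chord C w t \<Longrightarrow> t \<le> \<delta>"
proof -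
  have "\<forall>w\<in>W. \<exists>t. has_chord C w t \<and> (\<forall>s. has_chord C w s \<longrightarrow> s \<le> t)"
    using has_chord_longest[OF assms(1,3)] W by blast
  then obtain \<tau> where \<tau>: "\<And>w. w \<in> W \<Longrightarrow> has_chord C w (\<tau> w)"
    "\<And>w s. w \<in> W \<Longrightarrow> has_chord C w s \<Longrightarrow> s \<le> \<tau> w"
    by metis
  have "\<tau> w < D" if "w \<in> W" for w
  proof (rule ccontr)
    assume "\<not> \<tau> w < D"
    then have "has_chord C w D"
      using has_chord_shorten[OF assms(2) \<tau>(1)[OF that]] assms(5) by simp
    with W[OF that] show False
      by blast
  qed
  then have "Max (insert (D / 2) (\<tau> ` W)) < D"
    using assms(4,5) by simp
  moreover have "t \<le> Max (insert (D / 2) (\<tau> ` W))" if "w \<in> W" "has_chord C w t" for w t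
    using \<tau>(2)[OF that] assms(4) that(1) by (meson Max_ge finite_imageI finite_insert image_eqI
        insertCI order_trans)
  ultimately show ?thesis
    using that by blast
qed

lemma convex_body_has_chord:
  assumes "convex_body C"
  shows "\<exists>t>0. has_chord C w t"
proof -
  obtain a r where "r > 0" "ball a r \<subseteq> C"
    using assms by (auto simp: convex_body_def mem_interior)
  define t where "t = r / (norm w + 1)"
  have pos: "0 < norm w + 1"
    using norm_ge_zero[of w] by linarith
  have "r * norm w < r * (norm w + 1)"
    using \<open>r > 0\<close> by simp
  then have "norm (t *\<^sub>R w) < r"
    using \<open>r > 0\<close> by (simp add: t_def pos_divide_less_eq[OF pos] mult.commute)
  moreover have "t > 0"
    using \<open>r > 0\<close> pos by (simp add: t_def)
  ultimately show ?thesis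
    using \<open>r > 0\<close> \<open>ball a r \<subseteq> C\<close> by (auto simp: has_chord_def dist_norm intro!: exI[of _ t] bexI[of _ a])
qed

lemma convex_body_convex_hull_insert:
  assumes "convex_body (convex hull P)" "finite P"
  shows "convex_body (convex hull (insert y P))"
proof -
  have "interior (convex hull P) \<subseteq> interior (convex hull (insert y P))"
    by (intro interior_mono hull_mono) auto
  then show ?thesis
    using assms by (auto simp: convex_body_def compact_convex_hull finite_imp_compact)
qed

lemma convex_hull_chord_from_coords:
  fixes C :: "'a::real_vector set"
  assumes "finite C" "sum d C = 0" "(\<Sum>c\<in>C. d c *\<^sub>R c) = w" "w \<noteq> 0"
  defines "P \<equiv> \<Sum>c\<in>C. max (d c) 0"
  shows "P > 0" "has_chord (convex hull C) w (1 / P)"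
proof -
  have neg: "(\<Sum>c\<in>C. max (- d c) 0) = P"
  proof -
    have "(\<Sum>c\<in>C. max (d c) 0) - (\<Sum>c\<in>C. max (- d c) 0) = sum d C"
      by (simp add: sum_subtractf[symmetric]) (rule sum.cong, auto)
    then show ?thesis
      using assms(2) by (simp add: P_def)
  qed
  have "\<exists>j\<in>C. d j \<noteq> 0"
  proof (rule ccontr)
    assume "\<not> (\<exists>j\<in>C. d j \<noteq> 0)"
    then have "(\<Sum>c\<in>C. d c *\<^sub>R c) = 0"
      by simp
    with assms(3,4) show False
      by simp
  qed
  then obtain j where j: "j \<in> C" "d j \<noteq> 0"
    by blast
  have "max (d j) 0 \<le> P"
    unfolding P_def by (rule member_le_sum) (use j(1) assms(1) in auto)
  moreover have "max (- d j) 0 \<le> P"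
    unfolding neg[symmetric] by (rule member_le_sum) (use j(1) assms(1) in auto)
  ultimately show "P > 0"
    using j(2) by linarith
  have in_hull: "(\<Sum>c\<in>C. (max (e c) 0 / P) *\<^sub>R c) \<in> convex hull C"
    if "(\<Sum>c\<in>C. max (e c) 0) = P" for e
    unfolding convex_hull_finite[OF assms(1)] using that \<open>P > 0\<close>
    by (auto simp: sum_divide_distrib[symmetric] intro!: exI[of _ "\<lambda>c. max (e c) 0 / P"])
  define a where "a = (\<Sum>c\<in>C. (max (- d c) 0 / P) *\<^sub>R c)"
  have "a + (1 / P) *\<^sub>R w = (\<Sum>c\<in>C. (max (d c) 0 / P) *\<^sub>R c)"
    unfolding a_def assms(3)[symmetric] scaleR_sum_right sum.distrib[symmetric]
    by (rule sum.cong) (auto simp: field_simps max_def)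
  then have "a + (1 / P) *\<^sub>R w \<in> convex hull C"
    using in_hull[of d] by (simp add: P_def)
  moreover have "a \<in> convex hull C"
    using in_hull[of "\<lambda>c. - d c"] neg by (simp add: a_def)
  ultimately show "has_chord (convex hull C) w (1 / P)"
    unfolding has_chord_def by blast
qed

section \<open>Lattice lengths and the lattice diameter\<close>

definition lattice_lengths :: "'a::euclidean_space set \<Rightarrow> 'a set \<Rightarrow> real set" where
  "lattice_lengths L C =
     {lattice_length L a b | a b. lattice_segment L a b \<and> closed_segment a b \<subseteq> C}"

lemma lattice_diam_eq_Sup: "lattice_diam L C = Sup (lattice_lengths L C)"
  by (simp add: lattice_diam_def lattice_lengths_def)

locale euclidean_lattice =
  fixes L :: "'a::euclidean_space set"
  assumes is_lattice: "is_lattice L"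
begin

lemma zero_mem: "0 \<in> L"
  using is_lattice by (simp add: is_lattice_def)

lemma diff_mem: "x \<in> L \<Longrightarrow> y \<in> L \<Longrightarrow> x - y \<in> L"
  using is_lattice by (simp add: is_lattice_def)

lemma minus_mem: "x \<in> L \<Longrightarrow> - x \<in> L"
  using diff_mem[OF zero_mem, of x] by simp

lemma add_mem: "x \<in> L \<Longrightarrow> y \<in> L \<Longrightarrow> x + y \<in> L"
  using diff_mem[of x "- y"] minus_mem[of y] by simp

lemma of_int_scaleR_mem:
  assumes "x \<in> L"
  shows "of_int k *\<^sub>R x \<in> L"
proof -
  have nat_mem: "of_nat n *\<^sub>R x \<in> L" for n
    by (induction n) (auto simp: zero_mem algebra_simps assms intro: add_mem)
  show ?thesis
  proof (cases "k \<ge> 0")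
    case True
    then show ?thesis using nat_mem[of "nat k"] by simp
  next
    case False
    then show ?thesis using minus_mem[OF nat_mem[of "nat (- k)"]] by simp
  qed
qed

lemma exists_nonzero: "\<exists>v\<in>L. v \<noteq> 0"
proof (rule ccontr)
  assume "\<not> (\<exists>v\<in>L. v \<noteq> 0)"
  then have "span L \<subseteq> {0}"
    using span_mono[of L "{0}"] by auto
  moreover obtain b :: 'a where "b \<in> Basis"
    using nonempty_Basis by blast
  ultimately show False
    using is_lattice nonzero_Basis by (auto simp: is_lattice_def)
qed

lemma norm_bounded_below: "\<exists>e>0. \<forall>x\<in>L. x \<noteq> 0 \<longrightarrow> e \<le> norm x"
proof -
  have "0 isolated_in L"
    using is_lattice zero_mem by (auto simp: is_lattice_def discrete_def)
  then obtain e where "e > 0" "\<And>y. y \<in> L \<Longrightarrow> dist 0 y < e \<Longrightarrow> y = 0"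
    by (metis isolated_inE_dist)
  then show ?thesis
    by (intro exI[of _ e]) (auto simp: not_less[symmetric])
qed

lemma uniform_discrete: "uniform_discrete L"
proof -
  obtain e where e: "e > 0" "\<And>x. x \<in> L \<Longrightarrow> x \<noteq> 0 \<Longrightarrow> e \<le> norm x"
    using norm_bounded_below by blast
  show ?thesis
    unfolding uniform_discrete_def
    by (rule exI[of _ e]) (use e diff_mem in \<open>fastforce simp: dist_norm\<close>)
qed

lemma finite_Int_bounded: "bounded B \<Longrightarrow> finite (L \<inter> B)"
  using uniform_discrete_finite_iff[of "L \<inter> B"] uniform_discrete
  by (meson bounded_subset inf_le1 inf_le2 uniform_discrete_subset)

lemma least_positive_multiple:
  assumes "u \<noteq> 0" "t1 > 0" "t1 *\<^sub>R u \<in> L"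
  obtains t0 where "t0 > 0" "t0 *\<^sub>R u \<in> L" "\<And>t. t > 0 \<Longrightarrow> t *\<^sub>R u \<in> L \<Longrightarrow> t0 \<le> t"
proof -
  define Q where "Q = {t. 0 < t \<and> t \<le> t1 \<and> t *\<^sub>R u \<in> L}"
  have "(\<lambda>t. t *\<^sub>R u) ` Q \<subseteq> L \<inter> cball 0 (t1 * norm u)"
    by (auto simp: Q_def intro!: mult_right_mono)
  then have "finite ((\<lambda>t. t *\<^sub>R u) ` Q)"
    by (meson bounded_cball finite_subset finite_Int_bounded)
  moreover have "inj_on (\<lambda>t. t *\<^sub>R u) Q"
    using assms(1) by (auto simp: inj_on_def)
  ultimately have "finite Q"
    using finite_imageD by blast
  moreover have "t1 \<in> Q"
    using assms by (simp add: Q_def)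
  ultimately have min: "Min Q \<in> Q" "\<And>t. t \<in> Q \<Longrightarrow> Min Q \<le> t"
    by (auto intro: Min_in)
  show ?thesis
  proof (rule that[of "Min Q"])
    show "Min Q > 0" "Min Q *\<^sub>R u \<in> L"
      using min(1) by (auto simp: Q_def)
    fix t assume "t > 0" "t *\<^sub>R u \<in> L"
    then show "Min Q \<le> t"
      using min(2)[of t] min(2)[OF \<open>t1 \<in> Q\<close>] by (cases "t \<le> t1") (auto simp: Q_def)
  qed
qed

lemma lattice_line_eq_int_multiples:
  assumes "t0 > 0" "t0 *\<^sub>R u \<in> L" and least: "\<And>t. t > 0 \<Longrightarrow> t *\<^sub>R u \<in> L \<Longrightarrow> t0 \<le> t"
  shows "L \<inter> span {u} = range (\<lambda>k::int. of_int k *\<^sub>R (t0 *\<^sub>R u))"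
proof (intro equalityI subsetI)
  fix x assume x: "x \<in> L \<inter> span {u}"
  then obtain s where s: "x = s *\<^sub>R u"
    by (auto simp: span_singleton)
  define k where "k = \<lfloor>s / t0\<rfloor>"
  define r where "r = s - of_int k * t0"
  have r: "0 \<le> r" "r < t0"
    using assms(1) floor_divide_lower[OF assms(1), of s] floor_divide_upper[OF assms(1), of s]
    by (auto simp: r_def k_def algebra_simps)
  have "r *\<^sub>R u = x - of_int k *\<^sub>R (t0 *\<^sub>R u)"
    by (simp add: s r_def algebra_simps)
  also have "\<dots> \<in> L"
    using x assms(2) by (intro diff_mem of_int_scaleR_mem) auto
  finally have "r *\<^sub>R u \<in> L" .
  then have "r = 0"
    using least[of r] r by fastforce
  then show "x \<in> range (\<lambda>k::int. of_int k *\<^sub>R (t0 *\<^sub>R u))"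
    by (auto simp: s r_def)
next
  fix x assume "x \<in> range (\<lambda>k::int. of_int k *\<^sub>R (t0 *\<^sub>R u))"
  then obtain k :: int where k: "x = of_int k *\<^sub>R (t0 *\<^sub>R u)"
    by blast
  show "x \<in> L \<inter> span {u}"
    unfolding k by (intro IntI of_int_scaleR_mem[OF assms(2)] span_scale span_base) simp
qed

lemma primitive_dir_exists:
  assumes "lattice_segment L a b"
  shows "\<exists>p. primitive_dir L a b p"
proof -
  define u where "u = b - a"
  have "u \<noteq> 0"
    using assms by (auto simp: lattice_segment_def u_def)
  moreover obtain v c where "v \<in> L" "v \<noteq> 0" "u = c *\<^sub>R v"
    using assms by (auto simp: lattice_segment_def u_def)
  ultimately have v: "v \<in> L" "v \<noteq> 0" "u = c *\<^sub>R v" "u \<noteq> 0"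
    by simp_all
  have "\<bar>1 / c\<bar> *\<^sub>R u \<in> L"
    using v minus_mem[of v] by (cases "c > 0") (auto simp: abs_if)
  moreover have "\<bar>1 / c\<bar> > 0"
    using v by auto
  ultimately obtain t0 where t0: "t0 > 0" "t0 *\<^sub>R u \<in> L"
    and least: "\<And>t. t > 0 \<Longrightarrow> t *\<^sub>R u \<in> L \<Longrightarrow> t0 \<le> t"
    using least_positive_multiple[OF v(4)] by metis
  then have "primitive_dir L a b (t0 *\<^sub>R u)"
    using lattice_line_eq_int_multiples[OF t0 least] by (auto simp: primitive_dir_def u_def)
  then show ?thesis ..
qed

lemma lattice_segment_primitive:
  assumes "lattice_segment L a b"
  obtains p where "primitive_dir L a b p" "p \<in> L" "p \<noteq> 0"
    "b - a = lattice_length L a b *\<^sub>R p" "lattice_length L a b > 0"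
proof -
  define p where "p = (SOME p. primitive_dir L a b p)"
  have prim: "primitive_dir L a b p"
    unfolding p_def by (rule someI_ex[OF primitive_dir_exists[OF assms]])
  then obtain c where c: "p \<in> L" "c > 0" "p = c *\<^sub>R (b - a)"
    by (auto simp: primitive_dir_def)
  have "a \<noteq> b"
    using assms by (auto simp: lattice_segment_def)
  then have "lattice_length L a b = 1 / c"
    using c by (simp add: lattice_length_def p_def[symmetric])
  with c prim \<open>a \<noteq> b\<close> show ?thesis
    by (intro that[of p]) auto
qed

lemma lattice_length_ge:
  assumes "v \<in> L" "v \<noteq> 0" "t > 0"
  shows "lattice_segment L a (a + t *\<^sub>R v)" "t \<le> lattice_length L a (a + t *\<^sub>R v)"
proof -
  show seg: "lattice_segment L a (a + t *\<^sub>R v)"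
    unfolding lattice_segment_def using assms by auto
  define l where "l = lattice_length L a (a + t *\<^sub>R v)"
  obtain p where p: "primitive_dir L a (a + t *\<^sub>R v) p" "p \<noteq> 0" "t *\<^sub>R v = l *\<^sub>R p" "l > 0"
    using lattice_segment_primitive[OF seg] by (metis add_diff_cancel_left' l_def)
  have "v \<in> L \<inter> span {(a + t *\<^sub>R v) - a}"
    using assms by (auto simp: span_singleton intro!: rev_image_eqI[of "1 / t"])
  then obtain k :: int where k: "v = of_int k *\<^sub>R p"
    using p(1) unfolding primitive_dir_def by blast
  then have "(t * of_int k) *\<^sub>R p = l *\<^sub>R p"
    using p(3) by simp
  then have "t * of_int k = l"
    using p(2) by (metis scaleR_cancel_right)
  then have "real_of_int k > 0"
    using p(4) assms(3) by (metis zero_less_mult_pos)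
  then have "1 \<le> real_of_int k"
    by simp
  then show "t \<le> l"
    using mult_left_mono[of 1 "real_of_int k" t] assms(3) \<open>t * of_int k = l\<close> by simp
qed

lemma lattice_lengths_has_chord:
  assumes "l \<in> lattice_lengths L C"
  shows "\<exists>p\<in>L. p \<noteq> 0 \<and> l > 0 \<and> has_chord C p l"
proof -
  obtain a b where ab: "l = lattice_length L a b" "lattice_segment L a b" "closed_segment a b \<subseteq> C"
    using assms by (auto simp: lattice_lengths_def)
  obtain p where p: "p \<in> L" "p \<noteq> 0" "b - a = l *\<^sub>R p" "l > 0"
    using lattice_segment_primitive[OF ab(2)] unfolding ab(1) by blast
  have "a \<in> C" "a + l *\<^sub>R p \<in> C"
    using ab(3) p(3) by (auto simp flip: p(3))
  with p show ?thesis
    by (auto simp: has_chord_def)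
qed

lemma chord_le_lattice_length:
  assumes "convex C" "w \<in> L" "w \<noteq> 0" "t > 0" "has_chord C w t"
  shows "\<exists>l\<in>lattice_lengths L C. t \<le> l"
proof -
  obtain a where a: "a \<in> C" "a + t *\<^sub>R w \<in> C"
    using assms(5) by (auto simp: has_chord_def)
  then have "lattice_length L a (a + t *\<^sub>R w) \<in> lattice_lengths L C"
    using lattice_length_ge[OF assms(2-4)] closed_segment_subset[OF a assms(1)]
    by (auto simp: lattice_lengths_def)
  then show ?thesis
    using lattice_length_ge[OF assms(2-4), of a] by blast
qed

lemma bdd_above_lattice_lengths:
  assumes "bounded C"
  shows "bdd_above (lattice_lengths L C)"
proof -
  obtain e where e: "e > 0" "\<And>x. x \<in> L \<Longrightarrow> x \<noteq> 0 \<Longrightarrow> e \<le> norm x"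
    using norm_bounded_below by blast
  have "l \<le> diameter C / e" if l: "l \<in> lattice_lengths L C" for l
  proof -
    obtain p where p: "p \<in> L" "p \<noteq> 0" "l > 0" "has_chord C p l"
      using lattice_lengths_has_chord[OF l] by auto
    then have "l * norm p \<le> diameter C"
      using has_chord_norm_le[OF assms] p(3) by fastforce
    moreover have "l * e \<le> l * norm p"
      using e(2)[OF p(1,2)] p(3) by simp
    ultimately show ?thesis
      using e(1) by (simp add: field_simps)
  qed
  then show ?thesis
    by (auto simp: bdd_above_def)
qed

lemma chord_le_lattice_diam:
  assumes "bounded C" "convex C" "w \<in> L" "w \<noteq> 0" "t > 0" "has_chord C w t"
  shows "t \<le> lattice_diam L C"
proof -
  obtain l where "l \<in> lattice_lengths L C" "t \<le> l"
    using chord_le_lattice_length[OF assms(2-6)] by blast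
  then show ?thesis
    unfolding lattice_diam_eq_Sup
    using bdd_above_lattice_lengths[OF assms(1)] by (meson cSup_upper order_trans)
qed

lemma lattice_diam_le:
  assumes "lattice_lengths L C \<noteq> {}"
    and "\<And>w t. w \<in> L \<Longrightarrow> w \<noteq> 0 \<Longrightarrow> t > 0 \<Longrightarrow> has_chord C w t \<Longrightarrow> t \<le> D"
  shows "lattice_diam L C \<le> D"
  unfolding lattice_diam_eq_Sup
proof (rule cSup_least[OF assms(1)])
  fix l assume "l \<in> lattice_lengths L C"
  then obtain p where "p \<in> L" "p \<noteq> 0" "l > 0" "has_chord C p l"
    using lattice_lengths_has_chord by blast
  then show "l \<le> D"
    by (rule assms(2))
qed

lemma lattice_lengths_nonempty:
  assumes "convex_body C"
  shows "lattice_lengths L C \<noteq> {}"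
proof -
  obtain v where v: "v \<in> L" "v \<noteq> 0"
    using exists_nonzero by blast
  obtain t where "t > 0" "has_chord C v t"
    using convex_body_has_chord[OF assms] by blast
  then show ?thesis
    using chord_le_lattice_length[OF _ v] assms by (auto simp: convex_body_def)
qed

lemma lattice_diam_pos:
  assumes "convex_body C"
  shows "0 < lattice_diam L C"
proof -
  obtain v where v: "v \<in> L" "v \<noteq> 0"
    using exists_nonzero by blast
  obtain t where "t > 0" "has_chord C v t"
    using convex_body_has_chord[OF assms] by blast
  moreover have "bounded C" "convex C"
    using assms by (auto simp: convex_body_def compact_imp_bounded)
  ultimately show ?thesis
    using chord_le_lattice_diam[OF _ _ v] by fastforce
qed

lemma lattice_diam_mono:
  assumes "C \<subseteq> C'" "bounded C'" "lattice_lengths L C \<noteq> {}"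
  shows "lattice_diam L C \<le> lattice_diam L C'"
proof -
  have "lattice_lengths L C \<subseteq> lattice_lengths L C'"
    using assms(1) by (auto simp: lattice_lengths_def)
  then show ?thesis
    unfolding lattice_diam_eq_Sup
    using assms(3) bdd_above_lattice_lengths[OF assms(2)] by (simp add: cSup_subset_mono)
qed

lemma diameter_direction_iff:
  assumes "convex C"
  shows "diameter_direction L C w \<longleftrightarrow> w \<in> L \<and> w \<noteq> 0 \<and> has_chord C w (lattice_diam L C)"
  using closed_segment_subset[OF _ _ assms] ends_in_segment
  by (auto simp: diameter_direction_def has_chord_def)

lemma non_diameter_chords_shorter:
  assumes "convex_body C"
  obtains \<delta> where "\<delta> < lattice_diam L C"
    "\<And>w t. w \<in> L \<Longrightarrow> w \<noteq> 0 \<Longrightarrow> \<not> diameter_direction L C w \<Longrightarrow> has_chord C w t \<Longrightarrow> t \<le> \<delta>"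
proof -
  define D where "D = lattice_diam L C"
  have C: "compact C" "convex C" "bounded C" "C \<noteq> {}"
    using assms by (auto simp: convex_body_def compact_imp_bounded)
  have "D > 0"
    unfolding D_def using lattice_diam_pos[OF assms] .
  define R where "R = 2 * diameter C / D"
  define W where "W = {w \<in> L. w \<noteq> 0 \<and> \<not> diameter_direction L C w \<and> norm w \<le> R}"
  \<comment> \<open>only the finitely many lattice vectors of norm at most R admit chords longer than D/2\<close>
  have "finite W"
    by (rule finite_subset[OF _ finite_Int_bounded[OF bounded_cball[of 0 R]]]) (auto simp: W_def)
  moreover have "w \<noteq> 0 \<and> \<not> has_chord C w D" if "w \<in> W" for w
    using that diameter_direction_iff[OF C(2)] by (auto simp: W_def D_def)
  ultimately obtain \<delta> where \<delta>: "\<delta> < D" "\<And>w t. w \<in> W \<Longrightarrow> has_chord C w t \<Longrightarrow> t \<le> \<delta>"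
    using chords_shorter_on_finite_directions[OF C(1,2,4) _ \<open>D > 0\<close>] by blast
  show ?thesis
  proof (rule that[of "max \<delta> (D / 2)"])
    show "max \<delta> (D / 2) < lattice_diam L C"
      using \<delta>(1) \<open>D > 0\<close> by (simp add: D_def)
    fix w t
    assume w: "w \<in> L" "w \<noteq> 0" "\<not> diameter_direction L C w" and t: "has_chord C w t"
    show "t \<le> max \<delta> (D / 2)"
    proof (cases "norm w \<le> R")
      case True
      then show ?thesis
        using w t \<delta>(2) by (fastforce simp: W_def)
    next
      case False
      then have "diameter C < D / 2 * norm w"
        using \<open>D > 0\<close> by (simp add: R_def field_simps)
      then have "t < D / 2"
        by (rule has_chord_less_if_diameter_less[OF C(3) t])
      then show ?thesis
        by simp
    qed
  qed
qed

end

section \<open>Affine functions on a full-dimensional simplex\<close>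

locale full_simplex =
  fixes C :: "'a::euclidean_space set"
  assumes finite: "finite C"
    and independent: "\<not> affine_dependent C"
    and affine_hull: "affine hull C = UNIV"
begin

lemma card_eq: "card C = Suc DIM('a)"
  using aff_dim_affine_independent[OF independent] aff_dim_affine_hull[of C] affine_hull
  by simp

lemma barycentric_exists: "\<exists>u. sum u C = 1 \<and> (\<Sum>c\<in>C. u c *\<^sub>R c) = x"
  using affine_hull affine_hull_finite[OF finite] by blast

lemma barycentric_unique:
  assumes "sum u C = 1" "sum u' C = 1" "(\<Sum>c\<in>C. u c *\<^sub>R c) = (\<Sum>c\<in>C. u' c *\<^sub>R c)" "c \<in> C"
  shows "u c = u' c"
proof (rule ccontr)
  assume "u c \<noteq> u' c"
  moreover have "sum (\<lambda>c. u c - u' c) C = 0" "(\<Sum>c\<in>C. (u c - u' c) *\<^sub>R c) = 0"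
    using assms by (simp_all add: sum_subtractf scaleR_diff_left)
  ultimately have "affine_dependent C"
    using assms(4) affine_dependent_explicit_finite[OF finite] by fastforce
  with independent show False
    by simp
qed

lemma direction_coords_exist: "\<exists>d. sum d C = 0 \<and> (\<Sum>c\<in>C. d c *\<^sub>R c) = w"
proof -
  obtain u where "sum u C = 1" "(\<Sum>c\<in>C. u c *\<^sub>R c) = w"
    using barycentric_exists by blast
  moreover obtain u' where "sum u' C = 1" "(\<Sum>c\<in>C. u' c *\<^sub>R c) = 0"
    using barycentric_exists by blast
  ultimately show ?thesis
    by (intro exI[of _ "\<lambda>c. u c - u' c"]) (simp add: sum_subtractf scaleR_diff_left)
qed

lemma exists_vertex_maximizing: "\<exists>k\<in>C. \<forall>j\<in>C. f j \<le> (f k :: real)"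
proof -
  have "C \<noteq> {}"
    using card_eq by auto
  then have "Max (f ` C) \<in> f ` C"
    using finite by (intro Max_in) auto
  then obtain k where "k \<in> C" "f k = Max (f ` C)"
    by auto
  moreover have "f j \<le> Max (f ` C)" if "j \<in> C" for j
    using finite that by (intro Max_ge) auto
  ultimately show ?thesis
    by (intro bexI[of _ k]) auto
qed

definition affine_interp :: "('a \<Rightarrow> real) \<Rightarrow> 'a \<Rightarrow> real" where
  "affine_interp g x = (\<Sum>c\<in>C. (SOME u. sum u C = 1 \<and> (\<Sum>c\<in>C. u c *\<^sub>R c) = x) c * g c)"

lemma affine_interp_barycentric:
  assumes "sum u C = 1"
  shows "affine_interp g (\<Sum>c\<in>C. u c *\<^sub>R c) = (\<Sum>c\<in>C. u c * g c)"
proof -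
  define x where "x = (\<Sum>c\<in>C. u c *\<^sub>R c)"
  define u' where "u' = (SOME u. sum u C = 1 \<and> (\<Sum>c\<in>C. u c *\<^sub>R c) = x)"
  have "\<exists>u. sum u C = 1 \<and> (\<Sum>c\<in>C. u c *\<^sub>R c) = x"
    using assms x_def by blast
  then have "sum u' C = 1 \<and> (\<Sum>c\<in>C. u' c *\<^sub>R c) = x"
    unfolding u'_def by (rule someI_ex)
  then have "u' c = u c" if "c \<in> C" for c
    using barycentric_unique[of u' u c] assms that x_def by auto
  then show ?thesis
    unfolding x_def[symmetric] affine_interp_def u'_def[symmetric] by (intro sum.cong) auto
qed

lemma affine_interp_vertex:
  assumes "c \<in> C"
  shows "affine_interp g c = g c"
proof -
  define u where "u j = (if j = c then 1 else 0 :: real)" for j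
  have "sum u C = 1"
    using sum.remove[OF finite assms, of u] by (simp add: u_def)
  moreover have "(\<Sum>j\<in>C. u j *\<^sub>R j) = c"
    using sum.remove[OF finite assms, of "\<lambda>j. u j *\<^sub>R j"] by (simp add: u_def)
  moreover have "(\<Sum>j\<in>C. u j * g j) = g c"
    using sum.remove[OF finite assms, of "\<lambda>j. u j * g j"] by (simp add: u_def)
  ultimately show ?thesis
    using affine_interp_barycentric[of u g] by simp
qed

lemma affine_interp_affine:
  "affine_interp g ((1 - t) *\<^sub>R x + t *\<^sub>R z) = (1 - t) * affine_interp g x + t * affine_interp g z"
proof -
  obtain u where u: "sum u C = 1" "(\<Sum>c\<in>C. u c *\<^sub>R c) = x"
    using barycentric_exists by blast
  obtain u' where u': "sum u' C = 1" "(\<Sum>c\<in>C. u' c *\<^sub>R c) = z"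
    using barycentric_exists by blast
  define v where "v c = (1 - t) * u c + t * u' c" for c
  have v: "sum v C = 1"
    using u u' by (simp add: v_def sum.distrib sum_distrib_left[symmetric])
  have "(\<Sum>c\<in>C. v c *\<^sub>R c) = (1 - t) *\<^sub>R x + t *\<^sub>R z"
    by (simp add: v_def scaleR_add_left sum.distrib scaleR_sum_right flip: u(2) u'(2))
  then have "affine_interp g ((1 - t) *\<^sub>R x + t *\<^sub>R z) = (\<Sum>c\<in>C. v c * g c)"
    using affine_interp_barycentric[OF v, of g] by simp
  also have "\<dots> = (1 - t) * (\<Sum>c\<in>C. u c * g c) + t * (\<Sum>c\<in>C. u' c * g c)"
    by (simp add: v_def distrib_right sum.distrib sum_distrib_left mult.assoc)
  finally show ?thesis
    using affine_interp_barycentric[OF u(1)] affine_interp_barycentric[OF u'(1)] u u' by simp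
qed

lemma affine_interp_add_scaleR:
  assumes "sum d C = 0" "(\<Sum>c\<in>C. d c *\<^sub>R c) = w"
  shows "affine_interp g (x + t *\<^sub>R w) = affine_interp g x + t * (\<Sum>c\<in>C. d c * g c)"
proof -
  obtain u where u: "sum u C = 1" "(\<Sum>c\<in>C. u c *\<^sub>R c) = x"
    using barycentric_exists by blast
  define v where "v c = u c + t * d c" for c
  have v: "sum v C = 1"
    using u assms by (simp add: v_def sum.distrib sum_distrib_left[symmetric])
  have "(\<Sum>c\<in>C. v c *\<^sub>R c) = x + t *\<^sub>R w"
    by (simp add: v_def scaleR_add_left sum.distrib scaleR_sum_right flip: u(2) assms(2))
  then have "affine_interp g (x + t *\<^sub>R w) = (\<Sum>c\<in>C. v c * g c)"
    using affine_interp_barycentric[OF v, of g] by simp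
  also have "\<dots> = (\<Sum>c\<in>C. u c * g c) + t * (\<Sum>c\<in>C. d c * g c)"
    by (simp add: v_def algebra_simps sum.distrib sum_distrib_left)
  finally show ?thesis
    using affine_interp_barycentric[OF u(1)] u by simp
qed

lemma affine_interp_convex_hull_bounds:
  assumes "\<And>p. p \<in> P \<Longrightarrow> lo \<le> affine_interp g p \<and> affine_interp g p \<le> hi" "x \<in> convex hull P"
  shows "lo \<le> affine_interp g x \<and> affine_interp g x \<le> hi"
proof -
  have "convex {x. lo \<le> affine_interp g x \<and> affine_interp g x \<le> hi}"
    unfolding convex_alt
  proof (intro ballI allI impI)
    fix x z and u :: real
    assume x: "x \<in> {x. lo \<le> affine_interp g x \<and> affine_interp g x \<le> hi}"
      and z: "z \<in> {x. lo \<le> affine_interp g x \<and> affine_interp g x \<le> hi}" and u: "0 \<le> u \<and> u \<le> 1"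
    have "(1 - u) * affine_interp g x + u * affine_interp g z \<le> hi"
      by (rule convex_bound_le) (use x z u in auto)
    moreover have "(1 - u) * - affine_interp g x + u * - affine_interp g z \<le> - lo"
      by (rule convex_bound_le) (use x z u in auto)
    ultimately show "(1 - u) *\<^sub>R x + u *\<^sub>R z \<in> {x. lo \<le> affine_interp g x \<and> affine_interp g x \<le> hi}"
      by (simp add: affine_interp_affine)
  qed
  then have "convex hull P \<subseteq> {x. lo \<le> affine_interp g x \<and> affine_interp g x \<le> hi}"
    using assms(1) by (intro hull_minimal) auto
  then show ?thesis
    using assms(2) by auto
qed

lemma direction_coords_nonpos_on_facet:
  assumes k: "k \<in> C" "\<And>j. j \<in> C \<Longrightarrow> n \<bullet> j \<le> n \<bullet> k" and "n \<noteq> 0"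
    and d: "sum d C = 0" "(\<Sum>c\<in>C. d c *\<^sub>R c) = w" and "n \<bullet> w = 0"
  shows "\<exists>j\<in>C - {k}. d j \<le> 0"
proof (rule ccontr)
  assume "\<not> (\<exists>j\<in>C - {k}. d j \<le> 0)"
  then have pos: "d j > 0" if "j \<in> C - {k}" for j
    using that by force
  define f where "f j = d j * (n \<bullet> j - n \<bullet> k)" for j
  have "sum f C = n \<bullet> w - (n \<bullet> k) * sum d C"
    by (simp add: f_def d(2)[symmetric] inner_sum_right algebra_simps sum_subtractf sum_distrib_right)
  then have "sum (\<lambda>j. - f j) C = 0"
    using assms(6) d(1) by (simp add: sum_negf)
  moreover have "0 \<le> - f j" if "j \<in> C" for j
    using pos[of j] k(2)[OF that] that by (cases "j = k") (auto simp: f_def mult_nonneg_nonpos)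
  ultimately have "\<forall>j\<in>C. - f j = 0"
    using sum_nonneg_eq_0_iff[OF finite, of "\<lambda>j. - f j"] by blast
  then have f0: "f j = 0" if "j \<in> C" for j
    using that by simp
  have "n \<bullet> j = n \<bullet> k" if "j \<in> C" for j
    using pos[of j] f0[OF that] that by (cases "j = k") (auto simp: f_def)
  then have "affine hull C \<subseteq> {x. n \<bullet> x = n \<bullet> k}"
    by (intro hull_minimal affine_hyperplane) auto
  moreover have "n \<bullet> (k + n) \<noteq> n \<bullet> k"
    using \<open>n \<noteq> 0\<close> by (simp add: inner_add_right)
  ultimately show False
    using affine_hull by auto
qed

lemma direction_coords_sign_change:
  assumes k: "k \<in> C" "\<And>j. j \<in> C \<Longrightarrow> n \<bullet> j \<le> n \<bullet> k" and "n \<noteq> 0"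
    and d: "sum d C = 0" "(\<Sum>c\<in>C. d c *\<^sub>R c) = w" and "n \<bullet> w = 0"
  shows "\<exists>j\<in>C - {k}. d j \<le> 0" "\<exists>j\<in>C - {k}. 0 \<le> d j"
proof -
  show "\<exists>j\<in>C - {k}. d j \<le> 0"
    by (rule direction_coords_nonpos_on_facet[OF assms])
  have "sum (\<lambda>c. - d c) C = 0" "(\<Sum>c\<in>C. (- d c) *\<^sub>R c) = - w" "n \<bullet> - w = 0"
    using d assms(6) by (simp_all add: sum_negf)
  then show "\<exists>j\<in>C - {k}. 0 \<le> d j"
    using direction_coords_nonpos_on_facet[OF k \<open>n \<noteq> 0\<close>] by fastforce
qed

section \<open>Pushing a facet outwards\<close>

definition facet_centroid :: "'a \<Rightarrow> 'a" where
  "facet_centroid k = (1 / real DIM('a)) *\<^sub>R (\<Sum>j\<in>C - {k}. j)"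

definition pushed_vertex :: "'a \<Rightarrow> real \<Rightarrow> 'a" where
  "pushed_vertex k \<epsilon> = k + (1 + \<epsilon>) *\<^sub>R (facet_centroid k - k)"

lemma card_facet: "k \<in> C \<Longrightarrow> card (C - {k}) = DIM('a)"
  using card_eq finite by simp

lemma facet_centroid_in_hull:
  assumes "k \<in> C"
  shows "facet_centroid k \<in> convex hull C"
proof -
  have "(\<Sum>j\<in>C - {k}. (1 / real DIM('a)) *\<^sub>R j) \<in> convex hull C"
    using card_facet[OF assms] finite
    by (intro convex_sum) (auto simp: hull_inc)
  then show ?thesis
    by (simp add: facet_centroid_def scaleR_sum_right)
qed

lemma affine_interp_facet_centroid:
  assumes "k \<in> C"
  shows "affine_interp g (facet_centroid k) = (\<Sum>j\<in>C - {k}. g j) / real DIM('a)"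
proof -
  define u where "u j = (if j = k then 0 else 1 / real DIM('a))" for j
  have "sum u C = 1"
    using sum.remove[OF finite assms, of u] card_facet[OF assms] by (simp add: u_def)
  moreover have "(\<Sum>j\<in>C. u j *\<^sub>R j) = facet_centroid k"
    using sum.remove[OF finite assms, of "\<lambda>j. u j *\<^sub>R j"]
    by (simp add: u_def facet_centroid_def scaleR_sum_right)
  moreover have "(\<Sum>j\<in>C. u j * g j) = (\<Sum>j\<in>C - {k}. g j) / real DIM('a)"
    using sum.remove[OF finite assms, of "\<lambda>j. u j * g j"]
    by (simp add: u_def sum_divide_distrib)
  ultimately show ?thesis
    using affine_interp_barycentric[of u g] by simp
qed

lemma affine_interp_pushed_vertex:
  assumes "k \<in> C"
  shows "affine_interp g (pushed_vertex k \<epsilon>) =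
    (1 + \<epsilon>) * ((\<Sum>j\<in>C - {k}. g j) / real DIM('a)) - \<epsilon> * g k"
proof -
  have "pushed_vertex k \<epsilon> = (1 - (1 + \<epsilon>)) *\<^sub>R k + (1 + \<epsilon>) *\<^sub>R facet_centroid k"
    by (simp add: pushed_vertex_def algebra_simps)
  then have "affine_interp g (pushed_vertex k \<epsilon>) =
      (1 - (1 + \<epsilon>)) * affine_interp g k + (1 + \<epsilon>) * affine_interp g (facet_centroid k)"
    by (simp only: affine_interp_affine)
  then show ?thesis
    using assms by (simp add: affine_interp_vertex affine_interp_facet_centroid)
qed

lemma affine_interp_pushed_vertex_bounds:
  assumes k: "k \<in> C" and g: "\<And>j. j \<in> C \<Longrightarrow> 0 \<le> g j \<and> g j \<le> 1"
    and j1: "j1 \<in> C - {k}" "g j1 \<le> 1 / 2" and j2: "j2 \<in> C - {k}" "1 / 2 \<le> g j2"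
    and \<epsilon>: "0 \<le> \<epsilon>" "\<epsilon> \<le> 1 / (2 * real DIM('a))"
  shows "0 \<le> affine_interp g (pushed_vertex k \<epsilon>) \<and> affine_interp g (pushed_vertex k \<epsilon>) \<le> 1"
proof -
  define m where "m = real DIM('a)"
  define A where "A = (\<Sum>j\<in>C - {k}. g j)"
  have m: "m \<ge> 1"
    by (simp add: m_def Suc_leI)
  have "g j2 \<le> A"
    unfolding A_def using finite j2(1) g by (intro member_le_sum) auto
  then have A1: "1 / 2 \<le> A"
    using j2(2) by linarith
  have "A = g j1 + (\<Sum>j\<in>C - {k} - {j1}. g j)"
    unfolding A_def using finite j1(1) by (simp add: sum.remove)
  moreover have "(\<Sum>j\<in>C - {k} - {j1}. g j) \<le> real (card (C - {k} - {j1})) * 1"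
    using g by (intro sum_bounded_above) auto
  moreover have "card (C - {k} - {j1}) = DIM('a) - 1"
    using card_facet[OF k] finite j1(1) by simp
  ultimately have A2: "A \<le> m - 1 / 2"
    using j1(2) m by (simp add: m_def of_nat_diff DIM_positive Suc_leI)
  define x where "x = A / m"
  have x: "1 / (2 * m) \<le> x" "x \<le> 1 - 1 / (2 * m)"
    using A1 A2 m by (simp_all add: x_def field_simps)
  have "0 \<le> 1 / (2 * m)"
    using m by simp
  then have "0 \<le> x"
    using x(1) by linarith
  then have "0 \<le> \<epsilon> * x" "\<epsilon> * x \<le> \<epsilon> - \<epsilon> * (1 / (2 * m))" "0 \<le> \<epsilon> * (1 / (2 * m))"
    using \<epsilon> x m mult_left_mono[OF x(2) \<epsilon>(1)] by (simp_all add: algebra_simps)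
  moreover have "\<epsilon> * g k \<le> \<epsilon>" "0 \<le> \<epsilon> * g k"
    using \<epsilon> g[OF k] by (auto intro: mult_left_le)
  moreover have "affine_interp g (pushed_vertex k \<epsilon>) = x + \<epsilon> * x - \<epsilon> * g k"
    using affine_interp_pushed_vertex[OF k, of g \<epsilon>] by (simp add: x_def A_def m_def algebra_simps add_divide_distrib)
  ultimately show ?thesis
    using x \<epsilon>(2) unfolding m_def by linarith
qed

lemma pushed_vertex_notin_hull:
  assumes "k \<in> C" "\<epsilon> > 0"
  shows "pushed_vertex k \<epsilon> \<notin> convex hull C"
proof
  define g where "g j = (if j = k then 1 else 0 :: real)" for j
  assume "pushed_vertex k \<epsilon> \<in> convex hull C"
  then have "0 \<le> affine_interp g (pushed_vertex k \<epsilon>)"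
    using affine_interp_convex_hull_bounds[of C 0 g 1] by (auto simp: affine_interp_vertex g_def)
  moreover have "affine_interp g (pushed_vertex k \<epsilon>) = - \<epsilon>"
    using assms(1) by (simp add: affine_interp_pushed_vertex g_def)
  ultimately show False
    using assms(2) by simp
qed

lemma convex_hull_psubset_pushed_hull:
  assumes "k \<in> C" "\<epsilon> > 0"
  shows "convex hull C \<subset> convex hull (insert (pushed_vertex k \<epsilon>) C)"
proof
  show "convex hull C \<subseteq> convex hull (insert (pushed_vertex k \<epsilon>) C)"
    by (rule hull_mono) auto
  show "convex hull C \<noteq> convex hull (insert (pushed_vertex k \<epsilon>) C)"
    using pushed_vertex_notin_hull[OF assms] hull_inc[of "pushed_vertex k \<epsilon>"] by auto
qed

lemma pushed_hull_chord_shrinks: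
  assumes "k \<in> C" "0 \<le> \<epsilon>" "has_chord (convex hull (insert (pushed_vertex k \<epsilon>) C)) w l"
  shows "has_chord (convex hull C) w (l / (1 + \<epsilon>))"
proof -
  define c where "c = 1 / (1 + \<epsilon>)"
  define h where "h x = (1 - c) *\<^sub>R k + c *\<^sub>R x" for x
  have c: "0 \<le> c" "c \<le> 1"
    using assms(2) by (auto simp: c_def)
  have k_hull: "k \<in> convex hull C"
    using assms(1) by (simp add: hull_inc)
  have "h (pushed_vertex k \<epsilon>) = k + (c * (1 + \<epsilon>)) *\<^sub>R (facet_centroid k - k)"
    by (simp add: h_def pushed_vertex_def algebra_simps)
  also have "c * (1 + \<epsilon>) = 1"
    using assms(2) by (simp add: c_def)
  finally have "h (pushed_vertex k \<epsilon>) = facet_centroid k"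
    by simp
  moreover have "h j \<in> convex hull C" if "j \<in> C" for j
    unfolding h_def using c k_hull that by (intro convexD_alt convex_convex_hull) (auto simp: hull_inc)
  ultimately have "h ` insert (pushed_vertex k \<epsilon>) C \<subseteq> convex hull C"
    using facet_centroid_in_hull[OF assms(1)] by auto
  then have "convex hull (h ` insert (pushed_vertex k \<epsilon>) C) \<subseteq> convex hull C"
    by (simp add: convex_hull_subset)
  moreover have "h ` (convex hull P) = convex hull (h ` P)" for P
    unfolding h_def using convex_hull_affinity[of "(1 - c) *\<^sub>R k" c P] by simp
  ultimately have image: "h ` (convex hull (insert (pushed_vertex k \<epsilon>) C)) \<subseteq> convex hull C"
    by simp
  obtain a where "a \<in> convex hull (insert (pushed_vertex k \<epsilon>) C)"
    "a + l *\<^sub>R w \<in> convex hull (insert (pushed_vertex k \<epsilon>) C)"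
    using assms(3) by (auto simp: has_chord_def)
  then have "h a \<in> convex hull C" "h (a + l *\<^sub>R w) \<in> convex hull C"
    using image by auto
  moreover have "h (a + l *\<^sub>R w) = h a + (l / (1 + \<epsilon>)) *\<^sub>R w"
    by (simp add: h_def c_def algebra_simps)
  ultimately show ?thesis
    unfolding has_chord_def by auto
qed

lemma pushed_hull_parallel_chord:
  assumes k: "k \<in> C" "\<And>j. j \<in> C \<Longrightarrow> n \<bullet> j \<le> n \<bullet> k" and "n \<noteq> 0"
    and w: "n \<bullet> w = 0" "w \<noteq> 0" and \<epsilon>: "0 \<le> \<epsilon>" "\<epsilon> \<le> 1 / (2 * real DIM('a))"
    and l: "0 \<le> l" "has_chord (convex hull (insert (pushed_vertex k \<epsilon>) C)) w l"
  shows "has_chord (convex hull C) w l"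
proof -
  obtain d where d: "sum d C = 0" "(\<Sum>c\<in>C. d c *\<^sub>R c) = w"
    using direction_coords_exist by blast
  obtain j1 j2 where j: "j1 \<in> C - {k}" "d j1 \<le> 0" "j2 \<in> C - {k}" "0 \<le> d j2"
    using direction_coords_sign_change[OF k \<open>n \<noteq> 0\<close> d w(1)] by blast
  define g where "g j = (if d j > 0 then 1 else if d j < 0 then 0 else 1 / 2 :: real)" for j
  define P where "P = (\<Sum>c\<in>C. max (d c) 0)"
  have g01: "0 \<le> g j \<and> g j \<le> 1" if "j \<in> C" for j
    by (simp add: g_def)
  have "g j1 \<le> 1 / 2" "1 / 2 \<le> g j2"
    using j by (auto simp: g_def)
  then have pushed: "0 \<le> affine_interp g (pushed_vertex k \<epsilon>) \<and> affine_interp g (pushed_vertex k \<epsilon>) \<le> 1"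
    using affine_interp_pushed_vertex_bounds[where g = g, OF k(1) g01 j(1) _ j(3) _ \<epsilon>] by blast
  have bounds: "0 \<le> affine_interp g x \<and> affine_interp g x \<le> 1"
    if "x \<in> convex hull (insert (pushed_vertex k \<epsilon>) C)" for x
  proof (rule affine_interp_convex_hull_bounds[OF _ that])
    fix p assume "p \<in> insert (pushed_vertex k \<epsilon>) C"
    then show "0 \<le> affine_interp g p \<and> affine_interp g p \<le> 1"
      using pushed g01 by (auto simp: affine_interp_vertex)
  qed
  obtain a where a: "a \<in> convex hull (insert (pushed_vertex k \<epsilon>) C)"
    "a + l *\<^sub>R w \<in> convex hull (insert (pushed_vertex k \<epsilon>) C)"
    using l(2) by (auto simp: has_chord_def)
  have "(\<Sum>c\<in>C. d c * g c) = P"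
    unfolding P_def by (rule sum.cong) (auto simp: g_def)
  then have "affine_interp g (a + l *\<^sub>R w) = affine_interp g a + l * P"
    using affine_interp_add_scaleR[OF d] by simp
  then have "l * P \<le> 1"
    using bounds[OF a(1)] bounds[OF a(2)] by linarith
  moreover have "P > 0" and chord: "has_chord (convex hull C) w (1 / P)"
    using convex_hull_chord_from_coords[OF finite d w(2)] by (simp_all add: P_def)
  ultimately have "l \<le> 1 / P"
    by (simp add: le_divide_eq mult.commute)
  then show ?thesis
    by (rule has_chord_shorten[OF convex_convex_hull chord l(1)])
qed

end

lemma simplex_full_dim_obtains_vertices:
  fixes S :: "'a::euclidean_space set"
  assumes "int DIM('a) simplex S"
  obtains C where "full_simplex C" "S = convex hull C"
proof -
  obtain C where C: "finite C" "\<not> affine_dependent C" "int (card C) = int DIM('a) + 1"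
    "S = convex hull C"
    using assms by (auto simp: simplex)
  then have "affine hull C = UNIV"
    using aff_dim_affine_independent[OF C(2)] aff_dim_eq_full by fastforce
  with C show ?thesis
    using that by (simp add: full_simplex_def)
qed

lemma exists_pos_stretch_below:
  fixes \<delta> D b :: real
  assumes "\<delta> < D" "0 < D" "0 < b"
  obtains \<epsilon> where "0 < \<epsilon>" "\<epsilon> \<le> b" "(1 + \<epsilon>) * \<delta> < D"
proof
  define \<epsilon> where "\<epsilon> = min b ((D - \<delta>) / (2 * D))"
  show "0 < \<epsilon>" "\<epsilon> \<le> b"
    using assms by (auto simp: \<epsilon>_def)
  then have "\<epsilon> * \<delta> \<le> \<epsilon> * D" "\<epsilon> * D \<le> (D - \<delta>) / 2"
    using assms by (auto simp: \<epsilon>_def min_def field_simps)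
  then show "(1 + \<epsilon>) * \<delta> < D"
    using assms(1) by (simp add: algebra_simps)
qed

lemma (in full_simplex) lattice_diam_pushed_hull_le:
  assumes "euclidean_lattice L" "convex_body (convex hull C)"
    and k: "k \<in> C" "\<And>j. j \<in> C \<Longrightarrow> n \<bullet> j \<le> n \<bullet> k" and "n \<noteq> 0"
    and \<delta>: "\<And>w t. w \<in> L \<Longrightarrow> w \<noteq> 0 \<Longrightarrow> n \<bullet> w \<noteq> 0 \<Longrightarrow> has_chord (convex hull C) w t \<Longrightarrow> t \<le> \<delta>"
    and \<epsilon>: "0 < \<epsilon>" "\<epsilon> \<le> 1 / (2 * real DIM('a))" "(1 + \<epsilon>) * \<delta> \<le> lattice_diam L (convex hull C)"
  shows "lattice_diam L (convex hull (insert (pushed_vertex k \<epsilon>) C)) \<le> lattice_diam L (convex hull C)"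
proof -
  interpret euclidean_lattice L
    by fact
  have S: "bounded (convex hull C)" "convex (convex hull C)"
    using assms(2) by (auto simp: convex_body_def compact_imp_bounded)
  have "convex_body (convex hull (insert (pushed_vertex k \<epsilon>) C))"
    using assms(2) finite by (rule convex_body_convex_hull_insert)
  then show ?thesis
  proof (rule lattice_diam_le[OF lattice_lengths_nonempty])
    fix w t
    assume w: "w \<in> L" "w \<noteq> 0" and t: "t > 0" "has_chord (convex hull (insert (pushed_vertex k \<epsilon>) C)) w t"
    show "t \<le> lattice_diam L (convex hull C)"
    proof (cases "n \<bullet> w = 0")
      case True
      then have "has_chord (convex hull C) w t"
        using pushed_hull_parallel_chord[OF k \<open>n \<noteq> 0\<close> True w(2) _ \<epsilon>(2)] \<epsilon>(1) t by simp
      then show ?thesis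
        by (rule chord_le_lattice_diam[OF S w t(1)])
    next
      case False
      have "has_chord (convex hull C) w (t / (1 + \<epsilon>))"
        using pushed_hull_chord_shrinks[OF k(1) _ t(2)] \<epsilon>(1) by simp
      then have "t / (1 + \<epsilon>) \<le> \<delta>"
        using \<delta> w False by blast
      then have "t \<le> (1 + \<epsilon>) * \<delta>"
        using \<epsilon>(1) by (simp add: field_simps)
      then show ?thesis
        using \<epsilon>(3) by linarith
    qed
  qed
qed

lemma (in full_simplex) lattice_diam_pushed_hull:
  assumes "euclidean_lattice L" "convex_body (convex hull C)"
    and k: "k \<in> C" "\<And>j. j \<in> C \<Longrightarrow> n \<bullet> j \<le> n \<bullet> k" and "n \<noteq> 0"
    and normal: "\<And>v. diameter_direction L (convex hull C) v \<Longrightarrow> n \<bullet> v = 0"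
  obtains \<epsilon> where "\<epsilon> > 0"
    "lattice_diam L (convex hull (insert (pushed_vertex k \<epsilon>) C)) = lattice_diam L (convex hull C)"
proof -
  interpret euclidean_lattice L
    by fact
  obtain \<delta> where \<delta>: "\<delta> < lattice_diam L (convex hull C)"
    "\<And>w t. w \<in> L \<Longrightarrow> w \<noteq> 0 \<Longrightarrow> \<not> diameter_direction L (convex hull C) w \<Longrightarrow>
      has_chord (convex hull C) w t \<Longrightarrow> t \<le> \<delta>"
    using non_diameter_chords_shorter[OF assms(2)] by blast
  have \<delta>': "t \<le> \<delta>" if "w \<in> L" "w \<noteq> 0" "n \<bullet> w \<noteq> 0" "has_chord (convex hull C) w t" for w t
    using \<delta>(2) normal that by blast
  obtain \<epsilon> where \<epsilon>: "0 < \<epsilon>" "\<epsilon> \<le> 1 / (2 * real DIM('a))" "(1 + \<epsilon>) * \<delta> < lattice_diam L (convex hull C)"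
    using exists_pos_stretch_below[OF \<delta>(1) lattice_diam_pos[OF assms(2)], of "1 / (2 * real DIM('a))"]
    by auto
  have "lattice_diam L (convex hull (insert (pushed_vertex k \<epsilon>) C)) \<le> lattice_diam L (convex hull C)"
    using \<epsilon>(3) by (intro lattice_diam_pushed_hull_le[OF assms(1,2) k \<open>n \<noteq> 0\<close> \<delta>' \<epsilon>(1,2)]) auto
  moreover have "lattice_diam L (convex hull C) \<le> lattice_diam L (convex hull (insert (pushed_vertex k \<epsilon>) C))"
    using convex_body_convex_hull_insert[OF assms(2) finite]
    by (intro lattice_diam_mono hull_mono lattice_lengths_nonempty[OF assms(2)])
      (auto simp: convex_body_def compact_imp_bounded)
  ultimately show ?thesis
    using that \<epsilon>(1) by fastforce
qed

lemma exists_orthogonal_if_span_not_UNIV: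
  fixes V :: "'a::euclidean_space set"
  assumes "span V \<noteq> UNIV"
  obtains n where "n \<noteq> 0" "\<And>v. v \<in> V \<Longrightarrow> n \<bullet> v = 0"
proof -
  have "span V \<subset> span UNIV"
    using assms by auto
  then obtain n where "n \<noteq> 0" "\<And>y. y \<in> span V \<Longrightarrow> orthogonal n y"
    using orthogonal_to_subspace_exists_gen by blast
  then show ?thesis
    by (intro that[of n]) (auto simp: orthogonal_def intro: span_base)
qed

theorem proposition4p3:
  fixes L :: "'a::euclidean_space set" and S :: "'a set"
  assumes "is_lattice L"
    and "int DIM('a) simplex S"
    and "lattice_complete L S"
  shows "span {v. diameter_direction L S v} = UNIV"
proof (rule ccontr)
  assume "span {v. diameter_direction L S v} \<noteq> UNIV"
  then obtain n where "n \<noteq> 0" and normal: "\<And>v. diameter_direction L S v \<Longrightarrow> n \<bullet> v = 0"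
    by (rule exists_orthogonal_if_span_not_UNIV) blast
  obtain C where "full_simplex C" and S: "S = convex hull C"
    using assms(2) by (rule simplex_full_dim_obtains_vertices)
  interpret full_simplex C
    by fact
  obtain k where k: "k \<in> C" "\<And>j. j \<in> C \<Longrightarrow> n \<bullet> j \<le> n \<bullet> k"
    using exists_vertex_maximizing by blast
  have "convex_body (convex hull C)"
    using assms(3) by (simp add: lattice_complete_def S)
  then obtain \<epsilon> where "\<epsilon> > 0"
    and "lattice_diam L (convex hull (insert (pushed_vertex k \<epsilon>) C)) = lattice_diam L (convex hull C)"
    using lattice_diam_pushed_hull[OF euclidean_lattice.intro[OF assms(1)] _ k \<open>n \<noteq> 0\<close> normal[unfolded S]]
    by blast
  moreover have "convex hull C \<subset> convex hull (insert (pushed_vertex k \<epsilon>) C)"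
    using k(1) \<open>\<epsilon> > 0\<close> by (rule convex_hull_psubset_pushed_hull)
  moreover have "convex_body (convex hull (insert (pushed_vertex k \<epsilon>) C))"
    using \<open>convex_body (convex hull C)\<close> finite by (rule convex_body_convex_hull_insert)
  ultimately show False
    using assms(3) unfolding S lattice_complete_def by blast
qed

end
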